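(* Let $C_s=\begin{pmatrix}0&\mathbf 1_2\\-\mathbf 1_2&0\end{pmatrix}$ and $\mathrm{Sp}(4,\mathbb Z)=\{g\in M_4(\mathbb Z): g^TC_sg=C_s\}$. Consider the integer matrices $$S_1=\begin{pmatrix}0&0&1&0\\0&1&0&0\\-1&0&0&0\\0&0&0&1\end{pmatrix},\ S_2=\begin{pmatrix}1&0&0&0\\0&0&0&1\\0&0&1&0\\0&-1&0&0\end{pmatrix},\ Q_1=\begin{pmatrix}0&-1&0&0\\1&0&0&0\\0&0&0&-1\\0&0&1&0\end{pmatrix},\ Q_2=\begin{pmatrix}0&0&0&1\\0&0&1&0\\0&-1&0&0\\-1&0&0&0\end{pmatrix},$$ $$T_1=\begin{pmatrix}1&0&1&0\\0&1&0&0\\0&0&1&0\\0&0&0&1\end{pmatrix},\ T_2=\begin{pmatrix}1&0&0&0\\0&1&0&1\\0&0&1&0\\0&0&0&1\end{pmatrix},\ T_3=\begin{pmatrix}1&0&0&1\\0&1&1&0\\0&0&1&0\\0&0&0&1\end{pmatrix},\ T_4=\begin{pmatrix}1&1&0&0\\0&1&0&0\\0&0&1&0\\0&0&-1&1\end{pmatrix},$$ $$T_5=\begin{pmatrix}1&0&0&0\\-1&1&0&0\\0&0&1&1\\0&0&0&1\end{pmatrix},\ T_6=\begin{pmatrix}1&0&0&0\\0&1&0&0\\-1&0&1&0\\0&0&0&1\end{pmatrix},\ T_7=\begin{pmatrix}1&0&0&0\\0&1&0&0\\0&-1&1&0\\-1&0&0&1\end{pmatrix},\ T_8=\begin{pmatrix}1&0&0&0\\0&1&0&0\\0&0&1&0\\0&-1&0&1\end{pmatrix}.$$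 Then all these matrices lie in $\mathrm{Sp}(4,\mathbb Z)$, and: (i) the group $\mathfrak P_{32}$ generated by $S_1,S_2,Q_1,Q_2$ is finite of order $32$; it is generated by $\mathcal A=Q_1S_1$ and $\mathcal B=Q_2^3$, which satisfy $\mathcal A^8=\mathcal B^4=(\mathcal B\mathcal A)^4=\mathbf 1_4$; (ii) the set $\{\gamma T\gamma^{-1}:\gamma\in\mathfrak P_{32},\ T\in\{T_1^{\pm1},T_2^{\pm1},T_3^{\pm1},T_4^{\pm1}\}\}$ consists of exactly $16$ matrices, namely $T_1^{\pm1},\dots,T_8^{\pm1}$; (iii) $(T_1T_6)^6=(T_2T_8)^6=(T_3T_7)^6=(T_4T_5)^6=\mathbf 1_4$; (iv) consequently, letting $\mathfrak T$ be the group generated by $T_1,\dots,T_8$ and $\Delta_{32,8}$ the subgroup of $\mathrm{Sp}(4,\mathbb Z)$ generated by $\mathfrak P_{32}$ and $\mathfrak T$, every element of $\Delta_{32,8}$ can be written as $\gamma\, t$ with $\gamma\in\mathfrak P_{32}$, $t\in\mathfrak T$, and $\mathfrak T$ is a normal subgroup of $\Delta_{32,8}$.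
   Context: $\mathrm{Sp}(4,\mathbb R)$ acts on the Siegel upper half-plane of degree 2 (complex symmetric $2\times2$ matrices $Z$ with positive definite imaginary part) by $Z\mapsto (AZ+B)(CZ+D)^{-1}$ for $g=\begin{pmatrix}A&B\\C&D\end{pmatrix}$; $T_1,\dots,T_8$ are unipotent (parabolic) and $S_1,S_2,Q_1,Q_2$ lie in the maximal compact subgroup. *)

theory Defs
  imports "HOL-Analysis.Analysis"
begin

type_synonym imat4 = "int^4^4"

text \<open>Matrices are given row by row: M $ i $ j is the entry in row i, column j.\<close>
definition mat4 :: "int list list \<Rightarrow> imat4" where
  "mat4 rs = vector (map vector rs)"

fun mpow :: "imat4 \<Rightarrow> nat \<Rightarrow> imat4" where
  "mpow A 0 = mat 1"
| "mpow A (Suc n) = A ** mpow A n"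

inductive_set gen_group :: "imat4 set \<Rightarrow> imat4 set" for S where
  one: "mat 1 \<in> gen_group S"
| gen: "s \<in> S \<Longrightarrow> s \<in> gen_group S"
| mult: "a \<in> gen_group S \<Longrightarrow> b \<in> gen_group S \<Longrightarrow> a ** b \<in> gen_group S"
| inv: "a \<in> gen_group S \<Longrightarrow> invertible a \<Longrightarrow> matrix_inv a \<in> gen_group S"

definition Cs :: imat4 where
  "Cs = mat4 [[0,0,1,0],[0,0,0,1],[-1,0,0,0],[0,-1,0,0]]"

definition Sp4Z :: "imat4 set" where
  "Sp4Z = {g. transpose g ** Cs ** g = Cs}"

definition S1 :: imat4 where "S1 = mat4 [[0,0,1,0],[0,1,0,0],[-1,0,0,0],[0,0,0,1]]"
definition S2 :: imat4 where "S2 = mat4 [[1,0,0,0],[0,0,0,1],[0,0,1,0],[0,-1,0,0]]"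
definition Q1 :: imat4 where "Q1 = mat4 [[0,-1,0,0],[1,0,0,0],[0,0,0,-1],[0,0,1,0]]"
definition Q2 :: imat4 where "Q2 = mat4 [[0,0,0,1],[0,0,1,0],[0,-1,0,0],[-1,0,0,0]]"

definition T1 :: imat4 where "T1 = mat4 [[1,0,1,0],[0,1,0,0],[0,0,1,0],[0,0,0,1]]"
definition T2 :: imat4 where "T2 = mat4 [[1,0,0,0],[0,1,0,1],[0,0,1,0],[0,0,0,1]]"
definition T3 :: imat4 where "T3 = mat4 [[1,0,0,1],[0,1,1,0],[0,0,1,0],[0,0,0,1]]"
definition T4 :: imat4 where "T4 = mat4 [[1,1,0,0],[0,1,0,0],[0,0,1,0],[0,0,-1,1]]"
definition T5 :: imat4 where "T5 = mat4 [[1,0,0,0],[-1,1,0,0],[0,0,1,1],[0,0,0,1]]"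
definition T6 :: imat4 where "T6 = mat4 [[1,0,0,0],[0,1,0,0],[-1,0,1,0],[0,0,0,1]]"
definition T7 :: imat4 where "T7 = mat4 [[1,0,0,0],[0,1,0,0],[0,-1,1,0],[-1,0,0,1]]"
definition T8 :: imat4 where "T8 = mat4 [[1,0,0,0],[0,1,0,0],[0,0,1,0],[0,-1,0,1]]"

definition P32 :: "imat4 set" where "P32 = gen_group {S1, S2, Q1, Q2}"
definition TT :: "imat4 set" where "TT = gen_group {T1, T2, T3, T4, T5, T6, T7, T8}"
definition Delta32_8 :: "imat4 set" where "Delta32_8 = gen_group (P32 \<union> TT)"

end

theory Submission
  imports Defs
begin

(*
  Everything reduces to finitely many matrix computations once the groups are under control.
  The structural ingredient: if each generator of a matrix group maps a finite set into itself
  (under an action such as left multiplication or conjugation), then every group element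
  permutes that set, because an injective self-map of a finite set is onto.
  For left multiplication this puts P32 inside the 32-element set of products A^i (BA)^k,
  which consists of words in A and B.  For conjugation it shows that P32 permutes the sixteen
  matrices T_i^(+-1), and therefore normalizes the group they generate.  A group generated by
  a subgroup G and a subgroup H normalized by G is the product GH, which gives (iv).
*)

lemma vector_4 [simp]:
  "(vector [x, y, z, w] :: 'a::zero^4) $ 1 = x"
  "(vector [x, y, z, w] :: 'a::zero^4) $ 2 = y"
  "(vector [x, y, z, w] :: 'a::zero^4) $ 3 = z"
  "(vector [x, y, z, w] :: 'a::zero^4) $ 4 = w"
  unfolding vector_def by simp_all

lemma mat4_mult:
  "mat4 [[a11,a12,a13,a14],[a21,a22,a23,a24],[a31,a32,a33,a34],[a41,a42,a43,a44]] **
   mat4 [[b11,b12,b13,b14],[b21,b22,b23,b24],[b31,b32,b33,b34],[b41,b42,b43,b44]] =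
   mat4 [[a11*b11+a12*b21+a13*b31+a14*b41, a11*b12+a12*b22+a13*b32+a14*b42,
          a11*b13+a12*b23+a13*b33+a14*b43, a11*b14+a12*b24+a13*b34+a14*b44],
         [a21*b11+a22*b21+a23*b31+a24*b41, a21*b12+a22*b22+a23*b32+a24*b42,
          a21*b13+a22*b23+a23*b33+a24*b43, a21*b14+a22*b24+a23*b34+a24*b44],
         [a31*b11+a32*b21+a33*b31+a34*b41, a31*b12+a32*b22+a33*b32+a34*b42,
          a31*b13+a32*b23+a33*b33+a34*b43, a31*b14+a32*b24+a33*b34+a34*b44],
         [a41*b11+a42*b21+a43*b31+a44*b41, a41*b12+a42*b22+a43*b32+a44*b42,
          a41*b13+a42*b23+a43*b33+a44*b43, a41*b14+a42*b24+a43*b34+a44*b44]]"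
  unfolding mat4_def by (simp add: vec_eq_iff forall_4 matrix_matrix_mult_def sum_4)

lemma mat4_diff:
  "mat4 [[a11,a12,a13,a14],[a21,a22,a23,a24],[a31,a32,a33,a34],[a41,a42,a43,a44]] -
   mat4 [[b11,b12,b13,b14],[b21,b22,b23,b24],[b31,b32,b33,b34],[b41,b42,b43,b44]] =
   mat4 [[a11-b11, a12-b12, a13-b13, a14-b14], [a21-b21, a22-b22, a23-b23, a24-b24],
         [a31-b31, a32-b32, a33-b33, a34-b34], [a41-b41, a42-b42, a43-b43, a44-b44]]"
  unfolding mat4_def by (simp add: vec_eq_iff forall_4)

lemma mat4_transpose:
  "transpose (mat4 [[a11,a12,a13,a14],[a21,a22,a23,a24],[a31,a32,a33,a34],[a41,a42,a43,a44]]) =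
   mat4 [[a11,a21,a31,a41],[a12,a22,a32,a42],[a13,a23,a33,a43],[a14,a24,a34,a44]]"
  unfolding mat4_def by (simp add: vec_eq_iff forall_4 transpose_def)

lemma mat4_mat: "(mat c :: imat4) = mat4 [[c,0,0,0],[0,c,0,0],[0,0,c,0],[0,0,0,c]]"
  unfolding mat4_def by (simp add: vec_eq_iff forall_4 mat_def)

lemma mat4_eq_iff:
  "mat4 [[a11,a12,a13,a14],[a21,a22,a23,a24],[a31,a32,a33,a34],[a41,a42,a43,a44]] =
   mat4 [[b11,b12,b13,b14],[b21,b22,b23,b24],[b31,b32,b33,b34],[b41,b42,b43,b44]] \<longleftrightarrow>
   a11 = b11 \<and> a12 = b12 \<and> a13 = b13 \<and> a14 = b14 \<and> a21 = b21 \<and> a22 = b22 \<and> a23 = b23 \<and> a24 = b24 \<and>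
   a31 = b31 \<and> a32 = b32 \<and> a33 = b33 \<and> a34 = b34 \<and> a41 = b41 \<and> a42 = b42 \<and> a43 = b43 \<and> a44 = b44"
  unfolding mat4_def by (simp add: vec_eq_iff forall_4)

lemmas mat4_simps = mat4_mult mat4_diff mat4_transpose mat4_mat mat4_eq_iff

lemma
  fixes A :: "'a::semiring_1^'n^'n"
  assumes "invertible A"
  shows matrix_inv_right [simp]: "A ** matrix_inv A = mat 1"
    and matrix_inv_left [simp]: "matrix_inv A ** A = mat 1"
  using someI_ex[OF assms[unfolded invertible_def]] unfolding matrix_inv_def by auto

lemma matrix_inv_unique:
  fixes A B :: "'a::semiring_1^'n^'n"
  assumes AB: "A ** B = mat 1" and BA: "B ** A = mat 1"
  shows "invertible A" and "matrix_inv A = B"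
proof -
  show A_invertible: "invertible A" using assms unfolding invertible_def by blast
  have "matrix_inv A = matrix_inv A ** (A ** B)" by (simp add: AB)
  also have "\<dots> = (matrix_inv A ** A) ** B" by (rule matrix_mul_assoc)
  also have "\<dots> = B" using A_invertible by simp
  finally show "matrix_inv A = B" .
qed

lemma
  fixes A X :: "'a::semiring_1^'n^'n"
  assumes "invertible A"
  shows matrix_mul_inv_cancel_right [simp]: "X ** A ** matrix_inv A = X"
    and matrix_mul_inv_cancel_right' [simp]: "X ** matrix_inv A ** A = X"
  by (simp_all flip: matrix_mul_assoc add: assms)

lemma
  fixes A :: "'a::semiring_1^'n^'n"
  assumes "invertible A"
  shows invertible_matrix_inv: "invertible (matrix_inv A)"
    and matrix_inv_matrix_inv [simp]: "matrix_inv (matrix_inv A) = A"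
  using matrix_inv_unique[OF matrix_inv_left[OF assms] matrix_inv_right[OF assms]] by simp_all

lemma
  shows invertible_mat_1: "invertible (mat 1 :: 'a::semiring_1^'n^'n)"
    and matrix_inv_mat_1 [simp]: "matrix_inv (mat 1 :: 'a::semiring_1^'n^'n) = mat 1"
  by (rule matrix_inv_unique; simp)+

lemma matrix_inv_mult:
  fixes A B :: "'a::semiring_1^'n^'n"
  assumes "invertible A" "invertible B"
  shows "matrix_inv (A ** B) = matrix_inv B ** matrix_inv A"
  by (rule matrix_inv_unique) (simp_all add: assms matrix_mul_assoc)

lemma matrix_inv_conj:
  fixes g t :: "'a::semiring_1^'n^'n"
  assumes "invertible g" "invertible t"
  shows "matrix_inv (g ** t ** matrix_inv g) = g ** matrix_inv t ** matrix_inv g"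
  using assms by (simp add: matrix_inv_mult invertible_mult invertible_matrix_inv matrix_mul_assoc)

lemma gen_group_invertible:
  assumes "\<And>s. s \<in> S \<Longrightarrow> invertible s" and "a \<in> gen_group S"
  shows "invertible a"
  using assms(2)
  by induction (auto intro: assms(1) invertible_mult invertible_matrix_inv invertible_mat_1)

lemma gen_group_matrix_inv:
  assumes "\<And>s. s \<in> S \<Longrightarrow> invertible s" and "a \<in> gen_group S"
  shows "matrix_inv a \<in> gen_group S"
  using assms by (blast intro: gen_group.inv gen_group_invertible)

lemma gen_group_subset:
  assumes "S \<subseteq> gen_group S'"
  shows "gen_group S \<subseteq> gen_group S'"
proof
  show "a \<in> gen_group S'" if "a \<in> gen_group S" for a
    using that by induction (use assms in \<open>auto intro: gen_group.intros\<close>)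
qed

lemma mpow_in_gen_group: "s \<in> gen_group S \<Longrightarrow> mpow s n \<in> gen_group S"
  by (induction n) (auto intro: gen_group.intros)

lemma gen_group_permutes_finite_set:
  fixes f :: "imat4 \<Rightarrow> 'a \<Rightarrow> 'a"
  assumes f_one: "\<And>x. f (mat 1) x = x"
    and f_mult: "\<And>a b x. invertible a \<Longrightarrow> invertible b \<Longrightarrow> f (a ** b) x = f a (f b x)"
    and "finite N"
    and S_invertible: "\<And>s. s \<in> S \<Longrightarrow> invertible s"
    and S_maps_into: "\<And>s. s \<in> S \<Longrightarrow> f s ` N \<subseteq> N"
    and "a \<in> gen_group S"
  shows "f a ` N = N"
proof -
  have f_inv_cancel: "f (matrix_inv b) (f b x) = x" if "invertible b" for b x
    using f_mult[OF invertible_matrix_inv, of b b x] that by (simp add: f_one)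
  show ?thesis
    using \<open>a \<in> gen_group S\<close>
  proof induction
    case one
    show ?case by (simp add: f_one)
  next
    case (gen s)
    have "inj_on (f s) N"
      by (rule inj_on_inverseI[where g = "f (matrix_inv s)"]) (simp add: f_inv_cancel S_invertible gen)
    then show ?case using endo_inj_surj[OF \<open>finite N\<close> S_maps_into[OF gen]] by simp
  next
    case (mult a b)
    have "f (a ** b) ` N = f a ` f b ` N"
      using gen_group_invertible[OF S_invertible] mult.hyps by (simp add: f_mult image_image)
    with mult.IH show ?case by simp
  next
    case (inv a)
    have "f (matrix_inv a) ` N = f (matrix_inv a) ` f a ` N" using inv.IH by simp
    also have "\<dots> = N" using inv.hyps(2) by (simp add: image_image f_inv_cancel)
    finally show ?case .
  qed
qed

lemma gen_group_subset_finite_set: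
  assumes "finite N" "mat 1 \<in> N"
    and S_invertible: "\<And>s. s \<in> S \<Longrightarrow> invertible s"
    and S_maps_into: "\<And>s. s \<in> S \<Longrightarrow> (\<lambda>x. s ** x) ` N \<subseteq> N"
  shows "gen_group S \<subseteq> N"
proof
  fix a assume "a \<in> gen_group S"
  then have "(\<lambda>x. a ** x) ` N = N"
    by (intro gen_group_permutes_finite_set[where f = "(**)", OF _ _ \<open>finite N\<close> S_invertible S_maps_into])
       (simp_all add: matrix_mul_assoc)
  then show "a \<in> N" using \<open>mat 1 \<in> N\<close> by (metis image_eqI matrix_mul_rid)
qed

lemma gen_group_conj_invariant_finite_set:
  assumes "finite U"
    and S_invertible: "\<And>s. s \<in> S \<Longrightarrow> invertible s"
    and S_maps_into: "\<And>s. s \<in> S \<Longrightarrow> (\<lambda>u. s ** u ** matrix_inv s) ` U \<subseteq> U"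
    and "g \<in> gen_group S" "u \<in> U"
  shows "g ** u ** matrix_inv g \<in> U"
proof -
  have "(\<lambda>u. g ** u ** matrix_inv g) ` U = U"
    using \<open>g \<in> gen_group S\<close>
    by (intro gen_group_permutes_finite_set[where f = "\<lambda>g u. g ** u ** matrix_inv g",
          OF _ _ \<open>finite U\<close> S_invertible S_maps_into])
       (simp_all add: matrix_inv_mult matrix_mul_assoc)
  then show ?thesis using \<open>u \<in> U\<close> by blast
qed

lemma gen_group_conj_closed:
  assumes "invertible g"
    and T_conj: "\<And>t. t \<in> T \<Longrightarrow> g ** t ** matrix_inv g \<in> gen_group T"
    and "x \<in> gen_group T"
  shows "g ** x ** matrix_inv g \<in> gen_group T"
  using \<open>x \<in> gen_group T\<close>
proof induction
  case one
  show ?case using \<open>invertible g\<close> by (simp add: gen_group.one)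
next
  case (gen t)
  then show ?case by (rule T_conj)
next
  case (mult a b)
  have "g ** (a ** b) ** matrix_inv g = (g ** a ** matrix_inv g) ** (g ** b ** matrix_inv g)"
    using \<open>invertible g\<close> by (simp add: matrix_mul_assoc)
  with mult.IH show ?case by (simp add: gen_group.mult)
next
  case (inv a)
  have "g ** matrix_inv a ** matrix_inv g = matrix_inv (g ** a ** matrix_inv g)"
    using \<open>invertible g\<close> inv.hyps(2) by (simp add: matrix_inv_conj)
  moreover have "invertible (g ** a ** matrix_inv g)"
    using \<open>invertible g\<close> inv.hyps(2) by (simp add: invertible_mult invertible_matrix_inv)
  ultimately show ?case using inv.IH by (simp add: gen_group.inv)
qed

lemma gen_group_Un_normal_product:
  assumes S_invertible: "\<And>s. s \<in> S \<Longrightarrow> invertible s"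
    and T_invertible: "\<And>t. t \<in> T \<Longrightarrow> invertible t"
    and normal: "\<And>g t. g \<in> gen_group S \<Longrightarrow> t \<in> gen_group T \<Longrightarrow> g ** t ** matrix_inv g \<in> gen_group T"
    and "d \<in> gen_group (gen_group S \<union> gen_group T)"
  shows "\<exists>g \<in> gen_group S. \<exists>t \<in> gen_group T. d = g ** t"
  using \<open>d \<in> gen_group (gen_group S \<union> gen_group T)\<close>
proof induction
  case one
  show ?case using gen_group.one by force
next
  case (gen s)
  then show ?case using gen_group.one by force
next
  case (mult a b)
  then obtain g t g' t' where
    g: "g \<in> gen_group S" and t: "t \<in> gen_group T" and a: "a = g ** t" and
    g': "g' \<in> gen_group S" and t': "t' \<in> gen_group T" and b: "b = g' ** t'"
    by blast
  have g'_invertible: "invertible g'" using gen_group_invertible[OF S_invertible g'] .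
  have "matrix_inv g' ** t ** matrix_inv (matrix_inv g') \<in> gen_group T"
    using normal[OF gen_group_matrix_inv[OF S_invertible g'] t] .
  then have conj: "matrix_inv g' ** t ** g' \<in> gen_group T"
    using g'_invertible by simp
  have "a ** b = (g ** g') ** ((matrix_inv g' ** t ** g') ** t')"
    unfolding a b using g'_invertible by (simp add: matrix_mul_assoc)
  then show ?case using g g' conj t' by (blast intro: gen_group.mult)
next
  case (inv a)
  then obtain g t where g: "g \<in> gen_group S" and t: "t \<in> gen_group T" and a: "a = g ** t"
    by blast
  have g_invertible: "invertible g" using gen_group_invertible[OF S_invertible g] .
  have t_invertible: "invertible t" using gen_group_invertible[OF T_invertible t] .
  have "matrix_inv a = matrix_inv g ** (g ** matrix_inv t ** matrix_inv g)"
    unfolding a using g_invertible t_invertible by (simp add: matrix_inv_mult matrix_mul_assoc)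
  moreover have "g ** matrix_inv t ** matrix_inv g \<in> gen_group T"
    using normal[OF g gen_group_matrix_inv[OF T_invertible t]] .
  ultimately show ?case using gen_group_matrix_inv[OF S_invertible g] by blast
qed

lemma gen_group_Un_normal:
  assumes S_invertible: "\<And>s. s \<in> S \<Longrightarrow> invertible s"
    and T_invertible: "\<And>t. t \<in> T \<Longrightarrow> invertible t"
    and normal: "\<And>g t. g \<in> gen_group S \<Longrightarrow> t \<in> gen_group T \<Longrightarrow> g ** t ** matrix_inv g \<in> gen_group T"
    and "d \<in> gen_group (gen_group S \<union> gen_group T)" "x \<in> gen_group T"
  shows "d ** x ** matrix_inv d \<in> gen_group T"
proof -
  obtain g t where g: "g \<in> gen_group S" and t: "t \<in> gen_group T" and d: "d = g ** t"
    using gen_group_Un_normal_product[OF assms(1-4)] by blast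
  have g_invertible: "invertible g" using gen_group_invertible[OF S_invertible g] .
  have t_invertible: "invertible t" using gen_group_invertible[OF T_invertible t] .
  have "d ** x ** matrix_inv d = g ** (t ** x ** matrix_inv t) ** matrix_inv g"
    unfolding d using g_invertible t_invertible by (simp add: matrix_inv_mult matrix_mul_assoc)
  moreover have "t ** x ** matrix_inv t \<in> gen_group T"
    using t \<open>x \<in> gen_group T\<close> gen_group_matrix_inv[OF T_invertible t]
    by (blast intro: gen_group.mult)
  ultimately show ?thesis using normal[OF g] by simp
qed

lemmas P32_generator_defs = S1_def S2_def Q1_def Q2_def
lemmas transvection_defs = T1_def T2_def T3_def T4_def T5_def T6_def T7_def T8_def

lemma Sp4Z_generators: "{S1, S2, Q1, Q2, T1, T2, T3, T4, T5, T6, T7, T8} \<subseteq> Sp4Z"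
  by (simp add: Sp4Z_def Cs_def P32_generator_defs transvection_defs mat4_simps)

lemma signed_permutation_inverse:
  assumes "g \<in> {S1, S2, Q1, Q2}"
  shows "invertible g" and "matrix_inv g = transpose g"
proof -
  have "g ** transpose g = mat 1" "transpose g ** g = mat 1"
    using assms by (auto simp: P32_generator_defs mat4_simps)
  then show "invertible g" "matrix_inv g = transpose g" by (rule matrix_inv_unique)+
qed

(* The T_i are unipotent with (T_i - 1)^2 = 0. *)
lemma transvection_inverse:
  assumes "t \<in> {T1, T2, T3, T4, T5, T6, T7, T8}"
  shows "invertible t" and "matrix_inv t = mat 2 - t"
proof -
  have "t ** (mat 2 - t) = mat 1" "(mat 2 - t) ** t = mat 1"
    using assms by (auto simp: transvection_defs mat4_simps)
  then show "invertible t" "matrix_inv t = mat 2 - t" by (rule matrix_inv_unique)+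
qed

lemma transvection_pair_relations:
  "mpow (T1 ** T6) 6 = mat 1" "mpow (T2 ** T8) 6 = mat 1"
  "mpow (T3 ** T7) 6 = mat 1" "mpow (T4 ** T5) 6 = mat 1"
  by (simp_all add: transvection_defs eval_nat_numeral mat4_simps)

abbreviation \<A> :: imat4 where "\<A> \<equiv> Q1 ** S1"
abbreviation \<B> :: imat4 where "\<B> \<equiv> mpow Q2 3"

lemma P32_relations: "mpow \<A> 8 = mat 1" "mpow \<B> 4 = mat 1" "mpow (\<B> ** \<A>) 4 = mat 1"
  by (simp_all add: P32_generator_defs eval_nat_numeral mat4_simps)

lemma P32_normal_form:
  shows "P32 = (\<lambda>(i, k). mpow \<A> i ** mpow (\<B> ** \<A>) k) ` ({..<8} \<times> {..<4})" (is "_ = ?N")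
    and "P32 = gen_group {\<A>, \<B>}"
proof -
  have AB: "\<A> \<in> gen_group {\<A>, \<B>}" "\<B> \<in> gen_group {\<A>, \<B>}"
    by (simp_all add: gen_group.gen)
  have "?N \<subseteq> gen_group {\<A>, \<B>}"
    using AB by (auto intro!: gen_group.mult mpow_in_gen_group)
  moreover have "gen_group {\<A>, \<B>} \<subseteq> P32"
    unfolding P32_def by (rule gen_group_subset) (auto intro: gen_group.intros mpow_in_gen_group)
  moreover have "P32 \<subseteq> ?N"
    unfolding P32_def
  proof (rule gen_group_subset_finite_set)
    show "finite ?N" by simp
    show "mat 1 \<in> ?N" by (rule image_eqI[where x = "(0, 0)"]) simp_all
    show "invertible s" if "s \<in> {S1, S2, Q1, Q2}" for s
      using signed_permutation_inverse(1) that .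
    show "(\<lambda>x. s ** x) ` ?N \<subseteq> ?N" if "s \<in> {S1, S2, Q1, Q2}" for s
      using that by (auto simp: lessThan_nat_numeral lessThan_Suc eval_nat_numeral
          P32_generator_defs mat4_simps)
  qed
  ultimately show "P32 = ?N" "P32 = gen_group {\<A>, \<B>}" by auto
qed

lemma card_P32: "finite P32" "card P32 = 32"
  by (simp_all add: P32_normal_form(1) lessThan_nat_numeral lessThan_Suc eval_nat_numeral
      P32_generator_defs mat4_simps)

abbreviation Tpm4 :: "imat4 set" where
  "Tpm4 \<equiv> {T1, T2, T3, T4} \<union> matrix_inv ` {T1, T2, T3, T4}"
abbreviation Tpm8 :: "imat4 set" where
  "Tpm8 \<equiv> {T1, T2, T3, T4, T5, T6, T7, T8} \<union> matrix_inv ` {T1, T2, T3, T4, T5, T6, T7, T8}"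

lemma card_Tpm8: "card Tpm8 = 16"
  by (simp add: transvection_inverse(2) transvection_defs mat4_simps)

lemma Tpm8_conj_invariant:
  assumes "g \<in> P32" "u \<in> Tpm8"
  shows "g ** u ** matrix_inv g \<in> Tpm8"
proof (rule gen_group_conj_invariant_finite_set)
  show "finite Tpm8" "u \<in> Tpm8" "g \<in> gen_group {S1, S2, Q1, Q2}"
    using assms unfolding P32_def by simp_all
  show "invertible s" if "s \<in> {S1, S2, Q1, Q2}" for s
    using signed_permutation_inverse(1) that .
  show "(\<lambda>u. s ** u ** matrix_inv s) ` Tpm8 \<subseteq> Tpm8" if "s \<in> {S1, S2, Q1, Q2}" for s
    using that by (auto simp: signed_permutation_inverse(2) transvection_inverse(2)
        P32_generator_defs transvection_defs mat4_simps)
qed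

lemma S_conj_transvections:
  "S1 ** T1 ** matrix_inv S1 = T6" "S1 ** matrix_inv T3 ** matrix_inv S1 = T5"
  "S1 ** T4 ** matrix_inv S1 = T7" "S2 ** T2 ** matrix_inv S2 = T8"
  by (simp_all add: signed_permutation_inverse(2) transvection_inverse(2)
      P32_generator_defs transvection_defs mat4_simps)

lemma P32_invertible: "g \<in> P32 \<Longrightarrow> invertible g"
  unfolding P32_def by (rule gen_group_invertible) (rule signed_permutation_inverse(1))

lemma P32_conj_orbit: "{g ** T ** matrix_inv g | g T. g \<in> P32 \<and> T \<in> Tpm4} = Tpm8"
  (is "?O = _")
proof
  show "?O \<subseteq> Tpm8" using Tpm8_conj_invariant by blast
  have conj_mem: "g ** T ** matrix_inv g \<in> ?O" if "g \<in> P32" "T \<in> Tpm4" for g T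
    using that by blast
  have conj_inv_mem: "matrix_inv (g ** T ** matrix_inv g) \<in> ?O" if "g \<in> P32" "T \<in> Tpm4" for g T
  proof -
    have T1234_invertible: "invertible T1" "invertible T2" "invertible T3" "invertible T4"
      by (simp_all add: transvection_inverse(1))
    then have T_invertible: "invertible T" and "matrix_inv T \<in> Tpm4"
      using that(2) by (auto intro: invertible_matrix_inv)
    then show ?thesis using conj_mem[OF that(1)] P32_invertible[OF that(1)] T_invertible
      by (simp add: matrix_inv_conj)
  qed
  have P32_mem: "mat 1 \<in> P32" "S1 \<in> P32" "S2 \<in> P32"
    unfolding P32_def by (simp_all add: gen_group.intros)
  have "{T1, T2, T3, T4} \<subseteq> ?O" "matrix_inv ` {T1, T2, T3, T4} \<subseteq> ?O"
    using conj_mem[OF P32_mem(1)] by simp_all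
  moreover have "{T5, T6, T7, T8} \<subseteq> ?O" "matrix_inv ` {T5, T6, T7, T8} \<subseteq> ?O"
    using conj_mem[OF P32_mem(2), of T1] conj_mem[OF P32_mem(2), of "matrix_inv T3"]
      conj_mem[OF P32_mem(2), of T4] conj_mem[OF P32_mem(3), of T2]
      conj_inv_mem[OF P32_mem(2), of T1] conj_inv_mem[OF P32_mem(2), of "matrix_inv T3"]
      conj_inv_mem[OF P32_mem(2), of T4] conj_inv_mem[OF P32_mem(3), of T2]
    by (simp_all add: S_conj_transvections)
  ultimately show "Tpm8 \<subseteq> ?O" by auto
qed

lemma P32_normalizes_TT:
  assumes "g \<in> P32" "t \<in> TT"
  shows "g ** t ** matrix_inv g \<in> TT"
  unfolding TT_def
proof (rule gen_group_conj_closed[OF P32_invertible[OF assms(1)]])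
  show "t \<in> gen_group {T1, T2, T3, T4, T5, T6, T7, T8}" using assms(2) unfolding TT_def .
next
  fix s assume "s \<in> {T1, T2, T3, T4, T5, T6, T7, T8}"
  then have "g ** s ** matrix_inv g \<in> Tpm8" using Tpm8_conj_invariant[OF assms(1)] by blast
  moreover have "Tpm8 \<subseteq> gen_group {T1, T2, T3, T4, T5, T6, T7, T8}"
    using transvection_inverse(1) by (auto intro: gen_group.gen gen_group.inv)
  ultimately show "g ** s ** matrix_inv g \<in> gen_group {T1, T2, T3, T4, T5, T6, T7, T8}" by blast
qed

theorem mainTheorem2:
  shows "{S1, S2, Q1, Q2, T1, T2, T3, T4, T5, T6, T7, T8} \<subseteq> Sp4Z
    \<and> (finite P32 \<and> card P32 = 32
       \<and> P32 = gen_group {Q1 ** S1, mpow Q2 3}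
       \<and> mpow (Q1 ** S1) 8 = mat 1 \<and> mpow (mpow Q2 3) 4 = mat 1
       \<and> mpow (mpow Q2 3 ** (Q1 ** S1)) 4 = mat 1)
    \<and> (let Ts = {T1, T2, T3, T4} \<union> matrix_inv ` {T1, T2, T3, T4};
           Us = {T1, T2, T3, T4, T5, T6, T7, T8} \<union> matrix_inv ` {T1, T2, T3, T4, T5, T6, T7, T8}
       in {g ** T ** matrix_inv g | g T. g \<in> P32 \<and> T \<in> Ts} = Us \<and> card Us = 16)
    \<and> mpow (T1 ** T6) 6 = mat 1 \<and> mpow (T2 ** T8) 6 = mat 1
    \<and> mpow (T3 ** T7) 6 = mat 1 \<and> mpow (T4 ** T5) 6 = mat 1
    \<and> (\<forall>d \<in> Delta32_8. \<exists>g \<in> P32. \<exists>t \<in> TT. d = g ** t)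
    \<and> (\<forall>d \<in> Delta32_8. \<forall>t \<in> TT. d ** t ** matrix_inv d \<in> TT)"
proof -
  note product_hyps = signed_permutation_inverse(1) transvection_inverse(1)
    P32_normalizes_TT[unfolded P32_def TT_def]
  have "\<forall>d \<in> Delta32_8. \<exists>g \<in> P32. \<exists>t \<in> TT. d = g ** t"
    unfolding Delta32_8_def P32_def TT_def by (blast intro: gen_group_Un_normal_product[OF product_hyps])
  moreover have "\<forall>d \<in> Delta32_8. \<forall>t \<in> TT. d ** t ** matrix_inv d \<in> TT"
    unfolding Delta32_8_def P32_def TT_def by (blast intro: gen_group_Un_normal[OF product_hyps])
  ultimately show ?thesis
    using Sp4Z_generators card_P32 P32_normal_form(2) P32_relations P32_conj_orbit card_Tpm8
      transvection_pair_relations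
    unfolding Let_def by blast
qed

end
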